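(* Let $n$ be a positive integer and $m$ a positive even integer. Let $\mathcal{A}$ and $\mathcal{B}$ be $m$-th order $n$-dimensional real weakly symmetric tensors with $\mathcal{B}$ positive definite, and let $\lambda_{\min}$ be the smallest $\mathcal{B}_r$-eigenvalue of $\mathcal{A}$. Define $f_1:\mathbb{R}^n\to\mathbb{R}$ by $$f_1(x)=\frac{1}{2m}(\mathcal{B}x^m)^2+\frac{1}{m}\mathcal{A}x^m,$$ whose gradient is $\nabla f_1(x)=(\mathcal{B}x^m)\,\mathcal{B}x^{m-1}+\mathcal{A}x^{m-1}$. Then: (a) $f_1$ is coercive on $\mathbb{R}^n$, i.e. $f_1(x)\to+\infty$ as $\|x\|\to\infty$. (b) The critical points of $f_1$ are (i) $x=0$, and (ii) any $\mathcal{B}_r$-eigenvector $x$ of $\mathcal{A}$ associated with a $\mathcal{B}_r$-eigenvalue $\lambda<0$ of $\mathcal{A}$ satisfying $\mathcal{B}x^m=-\lambda$. (c) If $\lambda_{\min}<0$, then $f_1$ attains its global minimum value $\min f_1(x)=-\frac{1}{2m}\lambda_{\min}^2$ at any $\mathcal{B}_r$-eigenvector associated with $\lambda_{\min}$ satisfying $\mathcal{B}x^m=-\lambda_{\min}$. (d) If $\lambda_{\min}\ge0$, then $x=0$ is the unique critical point of $f_1$ and the unique global minimizer of $f_1$ on $\mathbb{R}^n$.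
   Context: An $m$-th order $n$-dimensional real tensor is an array $\mathcal{A}=(A_{i_1\cdots i_m})$ with indices in $\{1,\dots,n\}$ and real entries. For $x\in\mathbb{R}^n$, $\mathcal{A}x^m=\sum_{i_1,\dots,i_m=1}^n A_{i_1\cdots i_m}x_{i_1}\cdots x_{i_m}$, and $\mathcal{A}x^{m-1}\in\mathbb{R}^n$ has $i$-th entry $\sum_{i_2,\dots,i_m=1}^n A_{i i_2\cdots i_m}x_{i_2}\cdots x_{i_m}$. A tensor is weakly symmetric if $\nabla(\mathcal{A}x^m)=m\,\mathcal{A}x^{m-1}$ for all $x$, and positive definite if $\mathcal{A}x^m>0$ for all $x\ne0$. With $\mathcal{B}$ weakly symmetric positive definite, $\lambda\in\mathbb{R}$ is a $\mathcal{B}_r$-eigenvalue of $\mathcal{A}$, with $\mathcal{B}_r$-eigenvector $x\in\mathbb{R}^n\setminus\{0\}$, if $\mathcal{A}x^{m-1}=\lambda\,\mathcal{B}x^{m-1}$. The set of $\mathcal{B}_r$-eigenvalues is nonempty and has a smallest element $\lambda_{\min}$. *)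

theory Defs
  imports "HOL-Analysis.Analysis"
begin

text \<open>An m-th order tensor over the index type 'n (dimension n = CARD('n)):
  entries A i for multi-indices i : {0..<m} -> 'n (values outside {0..<m} irrelevant).\<close>
type_synonym 'n tensor = "(nat \<Rightarrow> 'n) \<Rightarrow> real"

definition multi_idx :: "nat \<Rightarrow> (nat \<Rightarrow> 'n) set" where
  "multi_idx m = PiE {..<m} (\<lambda>_. UNIV)"

definition tpow :: "'n::finite tensor \<Rightarrow> nat \<Rightarrow> real^'n \<Rightarrow> real" where
  "tpow A m x = (\<Sum>i\<in>multi_idx m. A i * (\<Prod>k<m. x $ i k))"

definition tvec :: "'n::finite tensor \<Rightarrow> nat \<Rightarrow> real^'n \<Rightarrow> real^'n" where
  "tvec A m x = (\<chi> j. \<Sum>i\<in>{i\<in>multi_idx m. i 0 = j}. A i * (\<Prod>k\<in>{1..<m}. x $ i k))"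

definition weakly_symmetric :: "'n::finite tensor \<Rightarrow> nat \<Rightarrow> bool" where
  "weakly_symmetric A m \<longleftrightarrow>
     (\<forall>x. ((\<lambda>y. tpow A m y) has_derivative (\<lambda>h. real m * (tvec A m x \<bullet> h))) (at x))"

definition pos_def_tensor :: "'n::finite tensor \<Rightarrow> nat \<Rightarrow> bool" where
  "pos_def_tensor A m \<longleftrightarrow> (\<forall>x. x \<noteq> 0 \<longrightarrow> tpow A m x > 0)"

definition Br_eigenpair :: "'n::finite tensor \<Rightarrow> 'n tensor \<Rightarrow> nat \<Rightarrow> real \<Rightarrow> real^'n \<Rightarrow> bool" where
  "Br_eigenpair A B m lam x \<longleftrightarrow> x \<noteq> 0 \<and> tvec A m x = lam *\<^sub>R tvec B m x"

definition Br_eigenvalues :: "'n::finite tensor \<Rightarrow> 'n tensor \<Rightarrow> nat \<Rightarrow> real set" where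
  "Br_eigenvalues A B m = {lam. \<exists>x. Br_eigenpair A B m lam x}"

definition f1 :: "'n::finite tensor \<Rightarrow> 'n tensor \<Rightarrow> nat \<Rightarrow> real^'n \<Rightarrow> real" where
  "f1 A B m x = (1 / (2 * real m)) * (tpow B m x)\<^sup>2 + (1 / real m) * tpow A m x"

definition critical_point :: "(real^'n::finite \<Rightarrow> real) \<Rightarrow> real^'n \<Rightarrow> bool" where
  "critical_point f x \<longleftrightarrow> (f has_derivative (\<lambda>h. 0)) (at x)"

end

theory Submission
  imports Defs "HOL-Real_Asymp.Real_Asymp"
begin

text \<open>
  Both \<open>\<A>x\<^sup>m\<close> and \<open>\<B>x\<^sup>m\<close> are homogeneous of degree \<open>m\<close>, and \<open>\<B>x\<^sup>m \<ge> c\<parallel>x\<parallel>\<^sup>m\<close> with \<open>c > 0\<close>,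
  so the term \<open>(\<B>x\<^sup>m)\<^sup>2\<close> dominates and \<open>f\<^sub>1\<close> is coercive; hence it has a global
  minimiser, which is a critical point. A nonzero critical point is exactly a \<open>\<B>\<^sub>r\<close>-eigenvector
  with eigenvalue \<open>\<lambda> = -\<B>x\<^sup>m < 0\<close>, and by Euler's identity \<open>\<A>x\<^sup>m = \<lambda>\<B>x\<^sup>m\<close> the value of \<open>f\<^sub>1\<close>
  there is \<open>-\<lambda>\<^sup>2/(2m)\<close>. So the minimum value is \<open>0\<close> or \<open>-\<lambda>\<^sup>2/(2m)\<close> for some
  \<open>\<lambda>\<^sub>m\<^sub>i\<^sub>n \<le> \<lambda> < 0\<close>, hence at least \<open>-\<lambda>\<^sub>m\<^sub>i\<^sub>n\<^sup>2/(2m)\<close>, and this bound is attained at suitably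
  scaled eigenvectors of \<open>\<lambda>\<^sub>m\<^sub>i\<^sub>n\<close>.
\<close>

lemma tpow_scaleR: "tpow A m (c *\<^sub>R x) = c ^ m * tpow A m x"
  unfolding tpow_def
  by (simp add: prod.distrib sum_distrib_left mult.assoc mult.left_commute)

lemma tvec_scaleR: "tvec A m (c *\<^sub>R x) = c ^ (m - 1) *\<^sub>R tvec A m x"
  unfolding tvec_def
  by (simp add: vec_eq_iff prod.distrib sum_distrib_left mult.assoc mult.left_commute)

lemma tpow_0: "m > 0 \<Longrightarrow> tpow A m 0 = 0"
  using tpow_scaleR[of A m 0 0] by (simp add: zero_power)

lemma tvec_0: "m \<ge> 2 \<Longrightarrow> tvec A m 0 = 0"
  using tvec_scaleR[of A m 0 0] by (simp add: zero_power)

lemma continuous_on_tpow: "continuous_on S (tpow A m)"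
  unfolding tpow_def by (intro continuous_intros)

text \<open>Euler's identity: differentiate \<open>t \<mapsto> \<A>(tx)\<^sup>m = t\<^sup>m \<A>x\<^sup>m\<close> at \<open>t = 1\<close> in two ways.\<close>

lemma inner_tvec_self:
  assumes "weakly_symmetric A m" "m > 0"
  shows "tvec A m x \<bullet> x = tpow A m x"
proof -
  have grad: "(tpow A m has_derivative (\<lambda>h. real m * (tvec A m x \<bullet> h))) (at (1 *\<^sub>R x))"
    using assms(1) unfolding weakly_symmetric_def by simp
  have "((\<lambda>t::real. t *\<^sub>R x) has_derivative (\<lambda>t. t *\<^sub>R x)) (at 1)"
    by (intro derivative_eq_intros) auto
  from has_derivative_compose[OF this grad]
  have "((\<lambda>t. tpow A m (t *\<^sub>R x)) has_real_derivative real m * (tvec A m x \<bullet> x)) (at 1)"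
    unfolding has_field_derivative_def by (rule has_derivative_eq_rhs) (auto simp: mult_ac)
  moreover have "((\<lambda>t. tpow A m (t *\<^sub>R x)) has_real_derivative real m * tpow A m x) (at 1)"
    unfolding tpow_scaleR by (rule derivative_eq_intros refl | simp)+
  ultimately show ?thesis
    using DERIV_unique assms(2) by fastforce
qed

lemma tpow_ge_min_on_sphere:
  fixes A :: "'n::finite tensor"
  assumes "m > 0"
  obtains u where "norm u = 1" "\<And>x. tpow A m u * norm x ^ m \<le> tpow A m x"
proof -
  have "axis undefined 1 \<in> sphere (0::real^'n) 1"
    by simp
  then obtain u where u: "u \<in> sphere (0::real^'n) 1" "\<forall>y\<in>sphere 0 1. tpow A m u \<le> tpow A m y"
    using continuous_attains_inf[OF compact_sphere _ continuous_on_tpow] by blast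
  have "tpow A m u * norm x ^ m \<le> tpow A m x" for x
  proof (cases "x = 0")
    case True
    then show ?thesis using assms by (simp add: tpow_0 zero_power)
  next
    case False
    then have "tpow A m x = norm x ^ m * tpow A m (x /\<^sub>R norm x)"
      using tpow_scaleR[of A m "norm x" "x /\<^sub>R norm x"] by simp
    moreover have "tpow A m u \<le> tpow A m (x /\<^sub>R norm x)"
      using u(2) False by simp
    ultimately show ?thesis
      by (metis mult.commute mult_right_mono norm_ge_zero zero_le_power)
  qed
  with u(1) that show ?thesis by simp
qed

lemma critical_point_iff_gradient_eq_0:
  assumes "(f has_derivative (\<lambda>h. g \<bullet> h)) (at x)"
  shows "critical_point f x \<longleftrightarrow> g = 0"
proof
  assume "critical_point f x"
  then have "(\<lambda>h. g \<bullet> h) = (\<lambda>h. 0)"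
    using assms has_derivative_unique unfolding critical_point_def by blast
  then have "g \<bullet> g = 0"
    by metis
  then show "g = 0" by simp
qed (use assms in \<open>simp add: critical_point_def\<close>)

lemma critical_point_if_global_min:
  assumes "(f has_derivative f') (at x)" "\<forall>y. f x \<le> f y"
  shows "critical_point f x"
proof -
  have "f' = (\<lambda>h. 0)"
    by (rule differential_zero_maxmin[OF UNIV_I open_UNIV assms(1)]) (use assms(2) in auto)
  with assms(1) show ?thesis
    unfolding critical_point_def by simp
qed

lemma coercive_attains_min:
  fixes f :: "'a::euclidean_space \<Rightarrow> real"
  assumes "continuous_on UNIV f" "filterlim f at_top at_infinity"
  obtains x where "\<forall>y. f x \<le> f y"
proof -
  obtain R where R: "\<And>y. R \<le> norm y \<Longrightarrow> f 0 \<le> f y"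
    using assms(2) unfolding filterlim_at_top eventually_at_infinity by blast
  have "continuous_on (cball 0 \<bar>R\<bar>) f"
    using assms(1) by (rule continuous_on_subset) simp
  moreover have "cball (0::'a) \<bar>R\<bar> \<noteq> {}"
    by simp
  ultimately obtain x where x: "\<forall>y\<in>cball 0 \<bar>R\<bar>. f x \<le> f y"
    using continuous_attains_inf[OF compact_cball] by blast
  have "f x \<le> f y" for y
  proof (cases "norm y \<le> \<bar>R\<bar>")
    case False
    then have "f 0 \<le> f y"
      by (intro R) simp
    moreover have "f x \<le> f 0"
      using x by simp
    ultimately show ?thesis by simp
  qed (use x in simp)
  with that show ?thesis by blast
qed

lemma f1_0: "m > 0 \<Longrightarrow> f1 A B m 0 = 0"
  by (simp add: f1_def tpow_0)

lemma continuous_on_f1: "continuous_on S (f1 A B m)"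
  unfolding f1_def by (intro continuous_intros continuous_on_tpow)

lemma f1_has_derivative:
  assumes "weakly_symmetric A m" "weakly_symmetric B m" "m > 0"
  shows "(f1 A B m has_derivative (\<lambda>h. (tpow B m x *\<^sub>R tvec B m x + tvec A m x) \<bullet> h)) (at x)"
proof -
  have "(tpow A m has_derivative (\<lambda>h. real m * (tvec A m x \<bullet> h))) (at x)"
       "(tpow B m has_derivative (\<lambda>h. real m * (tvec B m x \<bullet> h))) (at x)"
    using assms(1,2) unfolding weakly_symmetric_def by blast+
  then have "(f1 A B m has_derivative (\<lambda>h. 1 / (2 * real m) *
      (of_nat 2 * (real m * (tvec B m x \<bullet> h)) * tpow B m x ^ (2 - 1)) +
      1 / real m * (real m * (tvec A m x \<bullet> h)))) (at x)"
    unfolding f1_def[abs_def]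
    by (intro has_derivative_add has_derivative_mult_right has_derivative_power)
  then show ?thesis
    by (rule has_derivative_eq_rhs) (use assms(3) in \<open>auto simp: inner_add_left field_simps\<close>)
qed

lemma filterlim_f1_at_infinity:
  fixes A B :: "'n::finite tensor"
  assumes "pos_def_tensor B m" "m > 0"
  shows "filterlim (f1 A B m) at_top at_infinity"
proof -
  obtain u where u: "norm u = 1" "\<And>x. tpow B m u * norm x ^ m \<le> tpow B m x"
    using tpow_ge_min_on_sphere assms(2) by blast
  obtain v where v: "\<And>x. tpow A m v * norm x ^ m \<le> tpow A m x"
    using tpow_ge_min_on_sphere assms(2) by blast
  define c where "c = tpow B m u"
  define a where "a = tpow A m v"
  define g where "g s = (c * s)\<^sup>2 / (2 * real m) + a * s / real m" for s
  have "c > 0"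
    using assms(1) u(1) unfolding c_def pos_def_tensor_def by (metis norm_zero zero_neq_one)
  have "filterlim g at_top at_top"
    unfolding g_def using \<open>c > 0\<close> assms(2) by real_asymp
  moreover have "filterlim (\<lambda>x. norm x ^ m) at_top at_infinity"
    by (rule filterlim_pow_at_top[OF assms(2) filterlim_norm_at_top])
  ultimately have lim: "filterlim (\<lambda>x. g (norm x ^ m)) at_top at_infinity"
    by (rule filterlim_compose)
  have bound: "g (norm x ^ m) \<le> f1 A B m x" for x :: "real^'n"
  proof -
    have "(c * norm x ^ m)\<^sup>2 \<le> (tpow B m x)\<^sup>2"
      using u(2)[of x] \<open>c > 0\<close> unfolding c_def by (intro power_mono) auto
    then show ?thesis
      using v[of x] assms(2) unfolding g_def f1_def a_def
      by (auto simp: divide_right_mono add_mono)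
  qed
  show ?thesis
    by (rule filterlim_at_top_mono[OF lim always_eventually]) (use bound in blast)
qed

lemma f1_has_global_min:
  fixes A B :: "'n::finite tensor"
  assumes "pos_def_tensor B m" "m > 0"
  obtains x where "\<forall>y. f1 A B m x \<le> f1 A B m y"
  using coercive_attains_min[OF continuous_on_f1 filterlim_f1_at_infinity[OF assms]] .

lemma critical_point_f1_iff:
  assumes "weakly_symmetric A m" "weakly_symmetric B m" "pos_def_tensor B m" "m \<ge> 2"
  shows "critical_point (f1 A B m) x \<longleftrightarrow>
    x = 0 \<or> (\<exists>lam. lam < 0 \<and> Br_eigenpair A B m lam x \<and> tpow B m x = - lam)"
proof -
  have "critical_point (f1 A B m) x \<longleftrightarrow> tpow B m x *\<^sub>R tvec B m x + tvec A m x = 0"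
    using critical_point_iff_gradient_eq_0[OF f1_has_derivative[OF assms(1,2)]] assms(4) by simp
  also have "\<dots> \<longleftrightarrow> tvec A m x = (- tpow B m x) *\<^sub>R tvec B m x"
    by (simp add: eq_neg_iff_add_eq_0 add.commute)
  also have "\<dots> \<longleftrightarrow>
      x = 0 \<or> (\<exists>lam. lam < 0 \<and> Br_eigenpair A B m lam x \<and> tpow B m x = - lam)"
  proof
    assume eq: "tvec A m x = (- tpow B m x) *\<^sub>R tvec B m x"
    show "x = 0 \<or> (\<exists>lam. lam < 0 \<and> Br_eigenpair A B m lam x \<and> tpow B m x = - lam)"
    proof (cases "x = 0")
      case False
      then have "- tpow B m x < 0"
        using assms(3) by (simp add: pos_def_tensor_def)
      with eq False show ?thesis
        unfolding Br_eigenpair_def by (intro disjI2 exI[of _ "- tpow B m x"]) simp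
    qed simp
  qed (use assms(4) in \<open>auto simp: Br_eigenpair_def tvec_0\<close>)
  finally show ?thesis .
qed

lemma f1_Br_eigenpair:
  assumes "weakly_symmetric A m" "weakly_symmetric B m" "m > 0"
    and "Br_eigenpair A B m lam x" "tpow B m x = - lam"
  shows "f1 A B m x = - (lam\<^sup>2 / (2 * real m))"
proof -
  have "tpow A m x = tvec A m x \<bullet> x"
    using inner_tvec_self[OF assms(1,3)] by simp
  also have "\<dots> = lam * (tvec B m x \<bullet> x)"
    using assms(4) by (simp add: Br_eigenpair_def)
  also have "\<dots> = - lam\<^sup>2"
    using inner_tvec_self[OF assms(2,3)] assms(5) by (simp add: power2_eq_square)
  finally show ?thesis
    using assms(3,5) unfolding f1_def by (simp add: field_simps power2_eq_square)
qed

lemma exists_Br_eigenpair_normalized: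
  assumes "pos_def_tensor B m" "m > 0" "lam < 0" "Br_eigenpair A B m lam y"
  shows "\<exists>x. Br_eigenpair A B m lam x \<and> tpow B m x = - lam"
proof -
  have "tpow B m y > 0"
    using assms(1,4) by (simp add: pos_def_tensor_def Br_eigenpair_def)
  then have "- lam / tpow B m y > 0"
    using assms(3) by (simp add: divide_neg_pos)
  define t where "t = root m (- lam / tpow B m y)"
  have "t ^ m = - lam / tpow B m y"
    unfolding t_def using \<open>- lam / tpow B m y > 0\<close> assms(2) by (rule real_root_pow_pos[rotated])
  then have "tpow B m (t *\<^sub>R y) = - lam"
    using \<open>tpow B m y > 0\<close> by (simp add: tpow_scaleR)
  moreover have "t \<noteq> 0"
    unfolding t_def using \<open>tpow B m y > 0\<close> assms(2,3) by simp
  then have "Br_eigenpair A B m lam (t *\<^sub>R y)"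
    using assms(4) by (simp add: Br_eigenpair_def tvec_scaleR)
  ultimately show ?thesis by blast
qed

lemma f1_ge_of_eigenvalue_lower_bound:
  fixes A B :: "'n::finite tensor"
  assumes "weakly_symmetric A m" "weakly_symmetric B m" "pos_def_tensor B m" "m \<ge> 2"
    and "\<forall>lam\<in>Br_eigenvalues A B m. lmin \<le> lam"
  shows "- (lmin\<^sup>2 / (2 * real m)) \<le> f1 A B m y"
proof -
  have "m > 0" using assms(4) by simp
  obtain x where x: "\<forall>y. f1 A B m x \<le> f1 A B m y"
    using f1_has_global_min[OF assms(3) \<open>m > 0\<close>] .
  have "critical_point (f1 A B m) x"
    by (rule critical_point_if_global_min[OF f1_has_derivative x]) (use assms \<open>m > 0\<close> in auto)
  then consider "x = 0" | lam where "lam < 0" "Br_eigenpair A B m lam x" "tpow B m x = - lam"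
    using critical_point_f1_iff[OF assms(1-4)] by blast
  then have "- (lmin\<^sup>2 / (2 * real m)) \<le> f1 A B m x"
  proof cases
    case 1
    then have "f1 A B m x = 0"
      using f1_0[OF \<open>m > 0\<close>] by simp
    moreover have "0 \<le> lmin\<^sup>2 / (2 * real m)"
      by simp
    ultimately show ?thesis by linarith
  next
    case 2
    then have "lmin \<le> lam"
      using assms(5) by (auto simp: Br_eigenvalues_def)
    with \<open>lam < 0\<close> have "lam\<^sup>2 \<le> lmin\<^sup>2"
      using mult_mono[of "- lam" "- lmin" "- lam" "- lmin"] by (simp add: power2_eq_square)
    then show ?thesis
      using f1_Br_eigenpair[OF assms(1,2) \<open>m > 0\<close> 2(2,3)] by (simp add: divide_right_mono)
  qed
  with x show ?thesis by (meson order_trans)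
qed

theorem theorem5:
  fixes A B :: "'n::finite tensor" and m :: nat and lmin :: real
  assumes "m > 0" and "even m"
    and "weakly_symmetric A m" and "weakly_symmetric B m"
    and "pos_def_tensor B m"
    and "lmin \<in> Br_eigenvalues A B m" and "\<forall>lam\<in>Br_eigenvalues A B m. lmin \<le> lam"
  shows "(\<forall>x. (f1 A B m has_derivative
              (\<lambda>h. (tpow B m x *\<^sub>R tvec B m x + tvec A m x) \<bullet> h)) (at x)) \<and>
         filterlim (f1 A B m) at_top at_infinity \<and>
         (\<forall>x. critical_point (f1 A B m) x \<longleftrightarrow>
           x = 0 \<or> (\<exists>lam. lam < 0 \<and> Br_eigenpair A B m lam x \<and> tpow B m x = - lam)) \<and>
         (lmin < 0 \<longrightarrow>
           (\<exists>x. Br_eigenpair A B m lmin x \<and> tpow B m x = - lmin) \<and>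
           (\<forall>x. Br_eigenpair A B m lmin x \<and> tpow B m x = - lmin \<longrightarrow>
                 (\<forall>y. f1 A B m x \<le> f1 A B m y) \<and>
                 f1 A B m x = - (lmin\<^sup>2 / (2 * real m)))) \<and>
         (lmin \<ge> 0 \<longrightarrow>
           {x. critical_point (f1 A B m) x} = {0} \<and>
           (\<forall>y. f1 A B m 0 \<le> f1 A B m y) \<and>
           (\<forall>x. (\<forall>y. f1 A B m x \<le> f1 A B m y) \<longrightarrow> x = 0))"
proof -
  have "m \<ge> 2"
    using assms(1,2) by (simp add: dvd_imp_le)
  note grad = f1_has_derivative[OF assms(3,4,1)]
  note crit = critical_point_f1_iff[OF assms(3-5) \<open>m \<ge> 2\<close>]
  obtain y where "Br_eigenpair A B m lmin y"
    using assms(6) by (auto simp: Br_eigenvalues_def)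
  then have "lmin < 0 \<Longrightarrow> \<exists>x. Br_eigenpair A B m lmin x \<and> tpow B m x = - lmin"
    using exists_Br_eigenpair_normalized[OF assms(5,1)] by blast
  moreover have crit_0: "critical_point (f1 A B m) x \<longleftrightarrow> x = 0" if "lmin \<ge> 0" for x
    using crit assms(7) that by (force simp: Br_eigenvalues_def)
  moreover have min_crit: "critical_point (f1 A B m) x" if "\<forall>y. f1 A B m x \<le> f1 A B m y" for x
    using critical_point_if_global_min[OF grad that] .
  moreover have "\<forall>y. f1 A B m 0 \<le> f1 A B m y" if "lmin \<ge> 0"
  proof -
    obtain x where "\<forall>y. f1 A B m x \<le> f1 A B m y"
      using f1_has_global_min[OF assms(5,1)] .
    with min_crit crit_0[OF that] show ?thesis by metis
  qed
  ultimately show ?thesis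
    using grad filterlim_f1_at_infinity[OF assms(5,1)] crit f1_Br_eigenpair[OF assms(3,4,1)]
      f1_ge_of_eigenvalue_lower_bound[OF assms(3-5) \<open>m \<ge> 2\<close> assms(7)]
    by auto
qed

end
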